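(* Let $U\in\mathcal U_n$ and let $U'\in\mathcal U_{n+1}$ be obtained from $U$ by adding an $(n+1)$-st unit interval $I_{n+1}$ to the right of the intervals of $U$. Let $s$ be the number of elements $i\in\{1,\dots,n\}$ that are incomparable to $n+1$ in $U'$. Then $a(U')$ is obtained from $a(U)$ by adding a final peak in position $(n-s,n+1)$.
   Context: A unit interval order on $\{1,\dots,n\}$ is given by closed intervals $I_1,\dots,I_n$ of length $1$, numbered from left to right, with $i\prec j$ iff $I_i$ lies strictly to the left of $I_j$; $\mathcal U_n$ is the set of these; adding $I_{n+1}$ to the right means $I_1,\dots,I_{n+1}$ remain numbered from left to right. A Dyck path of length $n$ is a lattice path from $(0,0)$ to $(n,n)$ with unit up and right steps never going below $y=x$. For $1\le i<j\le n$, box $(i,j)$ is the square $[i-1,i]\times[j-1,j]$; the area set of a Dyck path is the set of boxes between it and the diagonal. $a(U)$ is the Dyck path whose area set is $\{(i,j):1\le i<j\le n,\ i\not\prec j\}$. Adding a final peak in position $(i,n+1)$ to a Dyck path $D$ of length $n$ means: $D$ passes through $(i,n)$, and the new path of length $n+1$ follows $D$ up to $(i,n)$, then takes an up step to $(i,n+1)$, then right steps to $(n+1,n+1)$. *)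

theory Defs
  imports Complex_Main
begin

text \<open>Unit interval orders: the interval I_i is [x i, x i + 1]; the intervals are
numbered from left to right, i.e. x is nondecreasing on the index range.\<close>

definition left_to_right :: "nat \<Rightarrow> (nat \<Rightarrow> real) \<Rightarrow> bool" where
  "left_to_right n x \<longleftrightarrow> (\<forall>i j. 1 \<le> i \<and> i \<le> j \<and> j \<le> n \<longrightarrow> x i \<le> x j)"

definition prec :: "(nat \<Rightarrow> real) \<Rightarrow> nat \<Rightarrow> nat \<Rightarrow> bool" where
  "prec x i j \<longleftrightarrow> x i + 1 < x j"

definition incomparable :: "(nat \<Rightarrow> real) \<Rightarrow> nat \<Rightarrow> nat \<Rightarrow> bool" where
  "incomparable x i j \<longleftrightarrow> \<not> prec x i j \<and> \<not> prec x j i"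

text \<open>Lattice paths: N = unit up step, E = unit right step.\<close>
datatype step = N | E

definition ups :: "step list \<Rightarrow> nat" where
  "ups D = length (filter (\<lambda>s. s = N) D)"

definition rights :: "step list \<Rightarrow> nat" where
  "rights D = length (filter (\<lambda>s. s = E) D)"

definition dyck :: "nat \<Rightarrow> step list \<Rightarrow> bool" where
  "dyck n D \<longleftrightarrow> ups D = n \<and> rights D = n \<and>
     (\<forall>k \<le> length D. rights (take k D) \<le> ups (take k D))"

definition passes_through :: "step list \<Rightarrow> nat \<Rightarrow> nat \<Rightarrow> bool" where
  "passes_through D p q \<longleftrightarrow> (\<exists>k \<le> length D. rights (take k D) = p \<and> ups (take k D) = q)"

text \<open>Height of the i-th right step (1-based): the y-coordinate at which the path
traverses the column [i-1,i].\<close>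
definition col_height :: "step list \<Rightarrow> nat \<Rightarrow> nat" where
  "col_height D i = ups (take (LEAST k. rights (take k D) = i) D)"

text \<open>Area set: boxes (i,j) = [i-1,i] x [j-1,j], 1 \<le> i < j \<le> n, lying between the
path and the diagonal.\<close>
definition area :: "nat \<Rightarrow> step list \<Rightarrow> (nat \<times> nat) set" where
  "area n D = {(i,j). 1 \<le> i \<and> i < j \<and> j \<le> n \<and> j \<le> col_height D i}"

definition a_path :: "nat \<Rightarrow> (nat \<Rightarrow> real) \<Rightarrow> step list" where
  "a_path n x = (THE D. dyck n D \<and>
     area n D = {(i,j). 1 \<le> i \<and> i < j \<and> j \<le> n \<and> \<not> prec x i j})"

text \<open>Adding a final peak in position (i, n+1) to a path D of length n (which passes
through (i,n)): follow D up to (i,n), go up to (i,n+1), then right to (n+1,n+1).\<close>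
definition add_final_peak :: "nat \<Rightarrow> step list \<Rightarrow> nat \<Rightarrow> step list" where
  "add_final_peak n D i = take (i + n) D @ [N] @ replicate (n + 1 - i) E"

end

theory Submission
  imports Defs
begin

text \<open>A Dyck path is determined by its column heights, and column i of a(U) reaches up to
the last interval I_j that does not lie strictly to the right of I_i. As the intervals are
numbered from left to right, the intervals incomparable to the new rightmost interval I_(n+1)
are the last s ones, I_(m+1), ..., I_n with m = n - s. So a(U) and a(U') share their first m
columns, and the remaining columns have height n in a(U) and n + 1 in a(U'): after column m,
a(U) climbs to height n and runs s steps right, while a(U') climbs to n + 1 and runs s + 1
steps right.\<close>

lemma rights_simps [simp]:
  "rights [] = 0" "rights (E # D) = Suc (rights D)" "rights (N # D) = rights D"
  "rights (D @ D') = rights D + rights D'"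
  "rights (replicate k N) = 0" "rights (replicate k E) = k"
  by (auto simp: rights_def filter_replicate)

lemma ups_simps [simp]:
  "ups [] = 0" "ups (E # D) = ups D" "ups (N # D) = Suc (ups D)"
  "ups (D @ D') = ups D + ups D'"
  "ups (replicate k N) = k" "ups (replicate k E) = 0"
  by (auto simp: ups_def filter_replicate)

lemma length_eq_rights_plus_ups: "length D = rights D + ups D"
proof (induction D)
  case (Cons s D)
  then show ?case by (cases s) auto
qed simp

lemma ups_take_le: "ups (take k D) \<le> ups D"
  by (metis append_take_drop_id le_add1 ups_simps(4))

lemma rights_take_le: "rights (take k D) \<le> rights D"
  by (metis append_take_drop_id le_add1 rights_simps(4))

lemma ex_take_rights_eq: "i \<le> rights D \<Longrightarrow> \<exists>k \<le> length D. rights (take k D) = i"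
proof (induction D arbitrary: i)
  case (Cons s D)
  show ?case
  proof (cases "i = 0")
    case True
    then show ?thesis by (intro exI[of _ 0]) auto
  next
    case False
    have "(if s = E then i - 1 else i) \<le> rights D" using Cons.prems by (cases s) auto
    with Cons.IH obtain k
      where "k \<le> length D" "rights (take k D) = (if s = E then i - 1 else i)" by blast
    with False show ?thesis by (intro exI[of _ "Suc k"]) (cases s; auto)
  qed
qed simp

lemma Least_take_rights:
  assumes "i \<le> rights D"
  shows "(LEAST k. rights (take k D) = i) \<le> length D"
    and "rights (take (LEAST k. rights (take k D) = i) D) = i"
proof -
  obtain k where k: "k \<le> length D" "rights (take k D) = i"
    using ex_take_rights_eq[OF assms] by blast
  show "(LEAST k. rights (take k D) = i) \<le> length D"
    using Least_le[of "\<lambda>k. rights (take k D) = i", OF k(2)] k(1) by linarith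
  show "rights (take (LEAST k. rights (take k D) = i) D) = i"
    using LeastI[of "\<lambda>k. rights (take k D) = i", OF k(2)] .
qed

lemma col_height_0 [simp]: "col_height D 0 = 0"
proof -
  have "(LEAST k. rights (take k D) = 0) = 0" by (rule Least_equality) auto
  then show ?thesis unfolding col_height_def by simp
qed

lemma col_height_le_ups: "col_height D i \<le> ups D"
  unfolding col_height_def by (rule ups_take_le)

lemma col_height_append:
  assumes "i \<le> rights D"
  shows "col_height (D @ D') i = col_height D i"
proof -
  define k0 where "k0 = (LEAST k. rights (take k D) = i)"
  have k0: "k0 \<le> length D" "rights (take k0 D) = i"
    using Least_take_rights[OF assms] unfolding k0_def by auto
  have "(LEAST k. rights (take k (D @ D')) = i) = k0"
  proof (rule Least_equality)
    show "rights (take k0 (D @ D')) = i" using k0 by simp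
  next
    fix y assume y: "rights (take y (D @ D')) = i"
    show "k0 \<le> y"
    proof (rule ccontr)
      assume "\<not> k0 \<le> y"
      with k0 y have "rights (take y D) = i" by simp
      then have "k0 \<le> y" unfolding k0_def by (rule Least_le)
      with \<open>\<not> k0 \<le> y\<close> show False ..
    qed
  qed
  with k0 show ?thesis unfolding col_height_def k0_def by simp
qed

lemma col_height_snoc_E: "col_height (D @ [E]) (Suc (rights D)) = ups D"
proof -
  have "(LEAST k. rights (take k (D @ [E])) = Suc (rights D)) = Suc (length D)"
  proof (rule Least_equality)
    fix y assume y: "rights (take y (D @ [E])) = Suc (rights D)"
    show "Suc (length D) \<le> y"
    proof (rule ccontr)
      assume "\<not> Suc (length D) \<le> y"
      then have "take y (D @ [E]) = take y D" by simp
      with y rights_take_le[of y D] show False by simp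
    qed
  qed simp
  then show ?thesis unfolding col_height_def by simp
qed

lemma dyck_col_height_ge:
  assumes "dyck n D" "i \<le> n"
  shows "i \<le> col_height D i"
  using assms Least_take_rights[of i D] unfolding dyck_def col_height_def by metis

fun path_of_heights :: "(nat \<Rightarrow> nat) \<Rightarrow> nat \<Rightarrow> step list" where
  "path_of_heights h 0 = []"
| "path_of_heights h (Suc m) = path_of_heights h m @ replicate (h (Suc m) - h m) N @ [E]"

lemma path_of_heights_cong:
  "(\<And>i. i \<le> m \<Longrightarrow> h i = g i) \<Longrightarrow> path_of_heights h m = path_of_heights g m"
  by (induction m) auto

lemma rights_path_of_heights [simp]: "rights (path_of_heights h m) = m"
  by (induction m) auto

lemma ups_path_of_heights:
  assumes "h 0 = 0" "\<And>i. i < m \<Longrightarrow> h i \<le> h (Suc i)"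
  shows "ups (path_of_heights h m) = h m"
  using assms by (induction m) (auto simp: less_Suc_eq)

lemma col_height_path_of_heights:
  assumes "h 0 = 0" "\<And>i. i < m \<Longrightarrow> h i \<le> h (Suc i)" "i \<le> m"
  shows "col_height (path_of_heights h m) i = h i"
  using assms
proof (induction m)
  case (Suc m)
  have ups: "ups (path_of_heights h m) = h m" using ups_path_of_heights[of h m] Suc.prems by simp
  have split: "path_of_heights h (Suc m) = path_of_heights h m @ replicate (h (Suc m) - h m) N @ [E]"
    by simp
  show ?case
  proof (cases "i \<le> m")
    case True
    then show ?thesis using Suc by (simp only: split col_height_append rights_path_of_heights)
  next
    case False
    then have "i = Suc m" using Suc.prems by simp
    moreover have "h m \<le> h (Suc m)" using Suc.prems by simp
    ultimately show ?thesis
      using col_height_snoc_E[of "path_of_heights h m @ replicate (h (Suc m) - h m) N"] ups by simp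
  qed
qed simp

lemma rights_take_path_of_heights_le:
  assumes "h 0 = 0" "\<And>i. i < m \<Longrightarrow> h i \<le> h (Suc i)" "\<And>i. i \<le> m \<Longrightarrow> i \<le> h i"
  shows "rights (take k (path_of_heights h m)) \<le> ups (take k (path_of_heights h m))"
  using assms
proof (induction m arbitrary: k)
  case (Suc m)
  define B where "B = path_of_heights h m"
  define d where "d = h (Suc m) - h m"
  have B: "rights B = m" "ups B = h m" "m \<le> h m"
    using ups_path_of_heights[of h m] Suc.prems unfolding B_def by auto
  have "Suc m \<le> h m + d" using Suc.prems unfolding d_def by force
  moreover have
    "take k (path_of_heights h (Suc m)) = take k B @ take (k - length B) (replicate d N @ [E])"
    unfolding B_def d_def by simp
  moreover have "rights (take k B) \<le> ups (take k B)" using Suc unfolding B_def by simp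
  ultimately show ?case
    using B by (cases "k - length B \<le> d") (auto simp: length_eq_rights_plus_ups)
qed simp

lemma dyck_path_of_heights:
  assumes "h 0 = 0" "\<And>i. i < n \<Longrightarrow> h i \<le> h (Suc i)" "\<And>i. i \<le> n \<Longrightarrow> i \<le> h i"
    and "h n = n"
  shows "dyck n (path_of_heights h n)"
  using assms ups_path_of_heights[of h n] rights_take_path_of_heights_le[of h n]
  unfolding dyck_def by simp

lemma path_of_col_heights:
  "D = path_of_heights (col_height D) (rights D) @ replicate (ups D - col_height D (rights D)) N"
proof (induction D rule: rev_induct)
  case (snoc s D)
  have heights:
    "path_of_heights (col_height (D @ [s])) (rights D) = path_of_heights (col_height D) (rights D)"
    by (rule path_of_heights_cong) (simp add: col_height_append)
  have "col_height D (rights D) \<le> ups D" by (rule col_height_le_ups)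
  moreover have "col_height (D @ [s]) (rights D) = col_height D (rights D)"
    by (simp add: col_height_append)
  ultimately show ?case
    using heights snoc.IH col_height_snoc_E[of D]
    by (cases s) (simp_all add: Suc_diff_le replicate_append_same[symmetric])
qed simp

lemma col_height_le_if_area_subset:
  assumes "dyck n D1" "dyck n D2" "area n D1 \<subseteq> area n D2" "i \<le> n"
  shows "col_height D1 i \<le> col_height D2 i"
proof (cases "col_height D1 i \<le> i \<or> i = 0")
  case True
  then show ?thesis using dyck_col_height_ge[OF assms(2,4)] by auto
next
  case False
  have "col_height D1 i \<le> n" using col_height_le_ups[of D1 i] assms(1) by (simp add: dyck_def)
  with False have "(i, col_height D1 i) \<in> area n D1" unfolding area_def by auto
  with assms(3) show ?thesis unfolding area_def by auto
qed

lemma dyck_eq_if_area_eq: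
  assumes "dyck n D1" "dyck n D2" "area n D1 = area n D2"
  shows "D1 = D2"
proof -
  have counts: "rights D1 = n" "rights D2 = n" "ups D1 = n" "ups D2 = n"
    using assms by (auto simp: dyck_def)
  have heights: "col_height D1 i = col_height D2 i" if "i \<le> n" for i
    using col_height_le_if_area_subset[OF assms(1,2) _ that]
      col_height_le_if_area_subset[OF assms(2,1) _ that] assms(3)
    by (simp add: antisym)
  have "D1 = path_of_heights (col_height D1) n @ replicate (n - col_height D1 n) N"
    using path_of_col_heights[of D1] counts by simp
  also have "\<dots> = path_of_heights (col_height D2) n @ replicate (n - col_height D2 n) N"
    using path_of_heights_cong[of n "col_height D1" "col_height D2"] heights by simp
  also have "\<dots> = D2"
    using path_of_col_heights[of D2] counts by simp
  finally show ?thesis .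
qed

lemma path_of_heights_flat_append:
  assumes "\<And>j. m < j \<Longrightarrow> j \<le> m + k \<Longrightarrow> h j = c"
  shows "path_of_heights h (m + k) @ replicate (c - h (m + k)) N =
    path_of_heights h m @ replicate (c - h m) N @ replicate k E"
  using assms
proof (induction k)
  case (Suc k)
  have "h (m + Suc k) = c" using Suc.prems by simp
  with Suc show ?case by (simp add: replicate_append_same[symmetric])
qed simp

lemma path_of_heights_final_peak:
  assumes "h 0 = 0" "\<And>i. i < m \<Longrightarrow> h i \<le> h (Suc i)" "m \<le> n" "h m \<le> n"
    and "\<And>i. m < i \<Longrightarrow> i \<le> n \<Longrightarrow> h i = n" "h n = n"
    and "\<And>i. i \<le> m \<Longrightarrow> h' i = h i" "\<And>i. m < i \<Longrightarrow> i \<le> n + 1 \<Longrightarrow> h' i = n + 1"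
  shows "passes_through (path_of_heights h n) m n \<and>
    path_of_heights h' (n + 1) = add_final_peak n (path_of_heights h n) m"
proof -
  obtain s where n: "n = m + s" using \<open>m \<le> n\<close> le_Suc_ex by blast
  define P where "P = path_of_heights h m @ replicate (n - h m) N"
  have P: "rights P = m" "ups P = n" "length P = m + n"
    using ups_path_of_heights[of h m] assms(1,2,4) unfolding P_def
    by (auto simp: length_eq_rights_plus_ups)
  have D: "path_of_heights h n = P @ replicate s E"
    using path_of_heights_flat_append[of m s h n] assms(5,6) n unfolding P_def by simp
  then have prefix: "take (m + n) (path_of_heights h n) = P" using P by simp
  have "path_of_heights h' (n + 1) =
      path_of_heights h' m @ replicate (n + 1 - h' m) N @ replicate (Suc s) E"
    using path_of_heights_flat_append[of m "Suc s" h' "n + 1"] assms(8) n by simp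
  also have "\<dots> = P @ [N] @ replicate (n + 1 - m) E"
    using path_of_heights_cong[of m h' h] assms(4,7) n unfolding P_def
    by (simp add: Suc_diff_le replicate_append_same[symmetric])
  finally have "path_of_heights h' (n + 1) = add_final_peak n (path_of_heights h n) m"
    unfolding add_final_peak_def prefix by (simp add: add.commute)
  moreover have "passes_through (path_of_heights h n) m n"
    unfolding passes_through_def using prefix D P by (intro exI[of _ "m + n"]) simp
  ultimately show ?thesis by simp
qed

definition last_overlap :: "nat \<Rightarrow> (nat \<Rightarrow> real) \<Rightarrow> nat \<Rightarrow> nat" where
  "last_overlap n x i = (if i = 0 then 0 else Max {j \<in> {i..n}. \<not> prec x i j})"

lemma last_overlap_0 [simp]: "last_overlap n x 0 = 0"
  by (simp add: last_overlap_def)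

lemma last_overlap_mem:
  assumes "1 \<le> i" "i \<le> n"
  shows "last_overlap n x i \<in> {j \<in> {i..n}. \<not> prec x i j}"
proof -
  have "i \<in> {j \<in> {i..n}. \<not> prec x i j}" using assms by (simp add: prec_def)
  then have "Max {j \<in> {i..n}. \<not> prec x i j} \<in> {j \<in> {i..n}. \<not> prec x i j}"
    by (intro Max_in) auto
  then show ?thesis using assms unfolding last_overlap_def by simp
qed

lemma last_overlap_le: "i \<le> n \<Longrightarrow> last_overlap n x i \<le> n"
  using last_overlap_mem[of i n x] by (cases "i = 0") auto

lemma le_last_overlap:
  assumes "1 \<le> i" "i \<le> j" "j \<le> n" "\<not> prec x i j"
  shows "j \<le> last_overlap n x i"
  using assms Max_ge[of "{j \<in> {i..n}. \<not> prec x i j}" j] unfolding last_overlap_def by simp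

lemma last_overlap_eq_top:
  assumes "1 \<le> i" "i \<le> n" "\<not> prec x i n"
  shows "last_overlap n x i = n"
  using last_overlap_mem[of i n x] le_last_overlap[of i n n x] assms by auto

lemma last_overlap_last [simp]: "last_overlap n x n = n"
  using last_overlap_eq_top[of n n x] by (cases n) (auto simp: last_overlap_def prec_def)

lemma last_overlap_Suc_if_prec:
  assumes "prec x i (Suc n)"
  shows "last_overlap (Suc n) x i = last_overlap n x i"
proof -
  have "{j \<in> {i..Suc n}. \<not> prec x i j} = {j \<in> {i..n}. \<not> prec x i j}"
    using assms le_Suc_eq by auto
  then show ?thesis unfolding last_overlap_def by simp
qed

lemma last_overlap_mono:
  assumes "left_to_right n x" "i \<le> i'" "i' \<le> n"
  shows "last_overlap n x i \<le> last_overlap n x i'"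
proof (cases "i = 0 \<or> last_overlap n x i < i'")
  case True
  then show ?thesis using last_overlap_mem[of i' n x] assms(2,3) by (auto simp: last_overlap_def)
next
  case False
  then have "x i \<le> x i'" using assms unfolding left_to_right_def by simp
  with False show ?thesis
    using last_overlap_mem[of i n x] le_last_overlap[of i' "last_overlap n x i" n x] assms(2,3)
    by (auto simp: prec_def)
qed

lemma prec_iff_last_overlap_less:
  assumes "left_to_right n x" "1 \<le> i" "i < j" "j \<le> n"
  shows "prec x i j \<longleftrightarrow> last_overlap n x i < j"
proof
  assume "prec x i j"
  show "last_overlap n x i < j"
  proof (rule ccontr)
    assume "\<not> last_overlap n x i < j"
    moreover have "last_overlap n x i \<in> {j \<in> {i..n}. \<not> prec x i j}"
      using last_overlap_mem assms by simp
    ultimately have "x j \<le> x (last_overlap n x i)" "\<not> prec x i (last_overlap n x i)"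
      using assms unfolding left_to_right_def by auto
    with \<open>prec x i j\<close> show False by (simp add: prec_def)
  qed
qed (use le_last_overlap[of i j n x] assms in force)

lemma a_path_eq_path_of_heights:
  assumes "left_to_right n x"
  shows "a_path n x = path_of_heights (last_overlap n x) n"
proof -
  let ?h = "last_overlap n x"
  have steps: "?h i \<le> ?h (Suc i)" if "i < n" for i
    using that by (intro last_overlap_mono[OF assms]) auto
  have "i \<le> ?h i" if "i \<le> n" for i
    using last_overlap_mem[of i n x] that by (cases "i = 0") auto
  with steps have dyck: "dyck n (path_of_heights ?h n)" by (intro dyck_path_of_heights) auto
  have "col_height (path_of_heights ?h n) i = ?h i" if "i \<le> n" for i
    using col_height_path_of_heights[of ?h n i] steps that by simp
  then have area:
    "area n (path_of_heights ?h n) = {(i,j). 1 \<le> i \<and> i < j \<and> j \<le> n \<and> \<not> prec x i j}"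
    unfolding area_def using prec_iff_last_overlap_less[OF assms] by fastforce
  show ?thesis
    unfolding a_path_def
  proof (rule the_equality)
    fix D
    assume "dyck n D \<and> area n D = {(i,j). 1 \<le> i \<and> i < j \<and> j \<le> n \<and> \<not> prec x i j}"
    with dyck area show "D = path_of_heights ?h n" by (metis dyck_eq_if_area_eq)
  qed (use dyck area in simp)
qed

lemma upward_closed_eq_greaterThanAtMost:
  assumes "S \<subseteq> {1..n}" "\<And>i j. i \<in> S \<Longrightarrow> i \<le> j \<Longrightarrow> j \<le> n \<Longrightarrow> j \<in> S"
  shows "S = {n - card S<..n}"
proof (cases "S = {}")
  case False
  define m where "m = Min S"
  have "finite S" using assms(1) finite_subset by blast
  then have "m \<in> S" "\<forall>i \<in> S. m \<le> i" using False unfolding m_def by auto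
  then have S: "S = {m..n}" using assms by fastforce
  moreover have "1 \<le> m" "m \<le> n" using \<open>m \<in> S\<close> assms(1) by auto
  ultimately show ?thesis by auto
qed simp

lemma prec_last_iff_le_diff_card:
  assumes "left_to_right (n + 1) x" "1 \<le> i" "i \<le> n"
  shows "prec x i (n + 1) \<longleftrightarrow> i \<le> n - card {i \<in> {1..n}. incomparable x i (n + 1)}"
proof -
  let ?S = "{i \<in> {1..n}. incomparable x i (n + 1)}"
  have incomparable_iff: "incomparable x i (n + 1) \<longleftrightarrow> \<not> prec x i (n + 1)"
    if "1 \<le> i" "i \<le> n" for i
  proof -
    have "x i \<le> x (n + 1)" using assms(1) that unfolding left_to_right_def by simp
    then show ?thesis by (auto simp: incomparable_def prec_def)
  qed
  define m where "m = n - card ?S"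
  have "?S = {m<..n}"
    unfolding m_def
  proof (rule upward_closed_eq_greaterThanAtMost)
    fix k l assume "k \<in> ?S" "k \<le> l" "l \<le> n"
    moreover from this have "x k \<le> x l" using assms(1) unfolding left_to_right_def by simp
    ultimately have "\<not> prec x l (n + 1)" using incomparable_iff[of k] by (simp add: prec_def)
    with \<open>k \<in> ?S\<close> \<open>k \<le> l\<close> \<open>l \<le> n\<close> show "l \<in> ?S" using incomparable_iff[of l] by simp
  qed auto
  then have "i \<in> ?S \<longleftrightarrow> m < i" using assms(3) by auto
  then show ?thesis using incomparable_iff[OF assms(2,3)] assms(2,3) unfolding m_def by auto
qed

theorem mainTheorem9:
  fixes n :: nat and x :: "nat \<Rightarrow> real"
  assumes "left_to_right (n + 1) x"
  defines "s \<equiv> card {i \<in> {1..n}. incomparable x i (n + 1)}"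
  shows "passes_through (a_path n x) (n - s) n \<and>
         a_path (n + 1) x = add_final_peak n (a_path n x) (n - s)"
proof -
  have lr: "left_to_right n x" using assms(1) unfolding left_to_right_def by simp
  have prec_iff: "prec x i (n + 1) \<longleftrightarrow> i \<le> n - s" if "1 \<le> i" "i \<le> n" for i
    using prec_last_iff_le_diff_card[OF assms(1) that] unfolding s_def .
  have "x n \<le> x (n + 1)" if "1 \<le> n" using assms(1) that unfolding left_to_right_def by simp
  then have old_tail: "last_overlap n x i = n" if "n - s < i" "i \<le> n" for i
    using that prec_iff[of i] last_overlap_eq_top[of i n x] by (auto simp: prec_def)
  have new_tail: "last_overlap (n + 1) x i = n + 1" if "n - s < i" "i \<le> n + 1" for i
  proof (cases "i = n + 1")
    case False
    then show ?thesis using that prec_iff[of i] by (intro last_overlap_eq_top) auto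
  qed simp
  have new_head: "last_overlap (n + 1) x i = last_overlap n x i" if "i \<le> n - s" for i
    using that prec_iff[of i] last_overlap_Suc_if_prec[of x i n] by (cases "i = 0") auto
  have "passes_through (path_of_heights (last_overlap n x) n) (n - s) n \<and>
      path_of_heights (last_overlap (n + 1) x) (n + 1) =
        add_final_peak n (path_of_heights (last_overlap n x) n) (n - s)"
  proof (rule path_of_heights_final_peak)
    show "last_overlap n x i \<le> last_overlap n x (Suc i)" if "i < n - s" for i
      using that by (intro last_overlap_mono[OF lr]) auto
  qed (use last_overlap_le old_tail new_tail new_head in simp_all)
  then show ?thesis
    unfolding a_path_eq_path_of_heights[OF lr] a_path_eq_path_of_heights[OF assms(1)] .
qed

end
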